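(* Let $0<\epsilon\le \mathrm{e}^{-2}$, set $a=2\sqrt{\log(1/\epsilon)}$, and define \[ \phi(p)=\frac{\operatorname{erf}(ap)+1}{2},\qquad \psi(p)=\phi(p)\,\mathrm{e}^{-p},\qquad p\in\mathbb{R}. \] Then: (i) $0<\psi(p)\le \mathrm{e}^{-|p|}$ for all $p\in\mathbb{R}$ (exponential decay on $\mathbb{R}$); (ii) $|\psi(p)-\mathrm{e}^{-p}|\le\epsilon$ for all $p\ge 1/2$; (iii) there is a constant $C>0$, independent of $\epsilon$ and $r$, such that for every integer $r$ with $\tfrac12\log(1/\epsilon)\le r\le\log(1/\epsilon)$, \[ \|\psi^{(r)}\|_{L^2(\mathbb{R})}^{1/r}\le C\, r . \]
   Context: $\operatorname{erf}(p)=\frac{2}{\sqrt{\pi}}\int_0^p \mathrm{e}^{-t^2}\,\mathrm{d}t$ is the error function; $\log$ is the natural logarithm; $\psi^{(r)}$ is the $r$-th derivative of $\psi$. *)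

theory Defs
  imports "HOL-Analysis.Analysis"
begin

definition erf :: "real \<Rightarrow> real" where
  "erf p = 2 / sqrt pi * (LBINT t=0..p. exp (- (t\<^sup>2)))"

definition a_par :: "real \<Rightarrow> real" where
  "a_par \<epsilon> = 2 * sqrt (ln (1 / \<epsilon>))"

definition phi :: "real \<Rightarrow> real \<Rightarrow> real" where
  "phi \<epsilon> p = (erf (a_par \<epsilon> * p) + 1) / 2"

definition psi :: "real \<Rightarrow> real \<Rightarrow> real" where
  "psi \<epsilon> p = phi \<epsilon> p * exp (- p)"

definition L2_norm_R :: "(real \<Rightarrow> real) \<Rightarrow> real" where
  "L2_norm_R f = sqrt (LINT x|lborel. (f x)\<^sup>2)"

end

theory Submission
  imports Defs "HOL-Complex_Analysis.Complex_Analysis" "HOL-Probability.Distributions"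
    "HOL-Real_Asymp.Real_Asymp"
begin

(* Since (erf (a p) + 1) / 2 is a smoothed unit step, psi differs from exp (- p) only by the
   Gaussian tail of 1 - erf, which Mills' inequality 1 - erf x <= exp (- x^2) / (x sqrt pi)
   controls: this gives (ii), and for p < 0 the decay in (i). For (iii), Leibniz' rule writes
   psi^(r) through the derivatives of the Gaussian; Cauchy's estimate on discs of radius sqrt r
   bounds the m-th of them by m! exp (2 r - x^2 / 2) / r^(m/2), and as a^2 <= 8 r this gives
   |psi^(r) p| <= (108 r)^r exp (- |p|), hence the L2 bound. *)

section \<open>The error function\<close>

lemma has_real_derivative_integral_gaussian:
  "((\<lambda>p. LBINT t=0..p. exp (- (t\<^sup>2))) has_real_derivative exp (- (x\<^sup>2))) (at x)"
proof -
  define a b where "a = min x 0 - 1" and "b = max x 0 + 1"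
  have "continuous_on {a..b} (\<lambda>t::real. exp (- (t\<^sup>2)))"
    by (intro continuous_intros)
  from interval_integral_FTC2[OF _ _ this, of 0 x]
  have "((\<lambda>p. LBINT t=0..p. exp (- (t\<^sup>2))) has_vector_derivative exp (- (x\<^sup>2))) (at x within {a..b})"
    unfolding zero_ereal_def by (simp add: a_def b_def)
  then have "((\<lambda>p. LBINT t=0..p. exp (- (t\<^sup>2))) has_vector_derivative exp (- (x\<^sup>2))) (at x within {a<..<b})"
    by (rule has_vector_derivative_within_subset) auto
  then have "((\<lambda>p. LBINT t=0..p. exp (- (t\<^sup>2))) has_vector_derivative exp (- (x\<^sup>2))) (at x)"
    by (subst (asm) has_vector_derivative_within_open) (auto simp: a_def b_def)
  then show ?thesis
    by (simp add: has_real_derivative_iff_has_vector_derivative)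
qed

lemma erf_has_real_derivative: "(erf has_real_derivative 2 / sqrt pi * exp (- (x\<^sup>2))) (at x)"
  unfolding erf_def[abs_def] by (rule DERIV_cmult[OF has_real_derivative_integral_gaussian])

lemma has_real_derivative_erf [derivative_intros]:
  "(f has_real_derivative f') (at x) \<Longrightarrow>
    ((\<lambda>x. erf (f x)) has_real_derivative 2 / sqrt pi * exp (- ((f x)\<^sup>2)) * f') (at x)"
  by (rule DERIV_chain2[OF erf_has_real_derivative])

lemma erf_0 [simp]: "erf 0 = 0"
  by (simp add: erf_def zero_ereal_def)

lemma erf_minus: "erf (- x) = - erf x"
proof -
  have "\<forall>y. ((\<lambda>y. erf y + erf (- y)) has_real_derivative 0) (at y)"
    by (auto intro!: derivative_eq_intros)
  from DERIV_isconst_all[OF this, of x 0] show ?thesis by simp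
qed

lemma erf_strict_mono: "x < y \<Longrightarrow> erf x < erf y"
  by (rule DERIV_pos_imp_increasing) (auto intro!: exI erf_has_real_derivative)

lemma erf_tendsto_1: "(erf \<longlongrightarrow> 1) at_top"
proof -
  have int: "set_integrable lborel {0..} (\<lambda>t::real. exp (- (t\<^sup>2)))"
    using gaussian_moment_0 unfolding set_integrable_def by (simp add: has_bochner_integral_iff)
  have "(LINT t:{0..}|lborel. exp (- (t\<^sup>2))) = sqrt pi / 2"
    using gaussian_moment_0 unfolding set_lebesgue_integral_def by (simp add: has_bochner_integral_iff)
  with tendsto_set_lebesgue_integral_at_top[OF _ int]
  have "((\<lambda>b. LINT t:{0..b}|lborel. exp (- (t\<^sup>2))) \<longlongrightarrow> sqrt pi / 2) at_top"
    by simp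
  from tendsto_mult_left[OF this, of "2 / sqrt pi"]
  have lim: "((\<lambda>b. 2 / sqrt pi * (LINT t:{0..b}|lborel. exp (- (t\<^sup>2)))) \<longlongrightarrow> 1) at_top"
    by simp
  show ?thesis
  proof (rule Lim_transform_eventually[OF lim])
    show "\<forall>\<^sub>F b in at_top. 2 / sqrt pi * (LINT t:{0..b}|lborel. exp (- (t\<^sup>2))) = erf b"
      using eventually_ge_at_top[of "0::real"]
      by eventually_elim (simp add: erf_def, metis interval_integral_Icc zero_ereal_def)
  qed
qed

lemma erf_less_1: "erf x < 1"
proof -
  have "\<forall>\<^sub>F y in at_top. erf (x + 1) \<le> erf y"
    using eventually_ge_at_top[of "x + 1"] by eventually_elim (metis erf_strict_mono order.order_iff_strict)
  then have "erf (x + 1) \<le> 1"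
    by (rule tendsto_lowerbound[OF erf_tendsto_1]) simp
  then show ?thesis
    using erf_strict_mono[of x "x + 1"] by simp
qed

lemma erf_greater_minus_1: "- 1 < erf x"
  using erf_less_1[of "- x"] by (simp add: erf_minus)

lemma erf_nonneg: "0 \<le> x \<Longrightarrow> 0 \<le> erf x"
  using erf_strict_mono[of 0 x] by (cases "x = 0") auto

lemma one_minus_erf_le:
  assumes "0 < x"
  shows "1 - erf x \<le> exp (- (x\<^sup>2)) / (x * sqrt pi)"
proof -
  define U where "U y = exp (- (y\<^sup>2)) / (y * sqrt pi) - (1 - erf y)" for y
  have "0 < U x"
  proof (rule DERIV_neg_imp_decreasing_at_top[where f = U and b = x])
    fix t assume "x \<le> t"
    with assms have "0 < t" by simp
    define s where "s = sqrt pi"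
    have "0 < s" by (simp add: s_def)
    then have "(U has_real_derivative - exp (- (t\<^sup>2)) / (t\<^sup>2 * s)) (at t)"
      unfolding U_def[abs_def] s_def[symmetric] using \<open>0 < t\<close>
      by (auto intro!: derivative_eq_intros simp: field_simps power2_eq_square s_def[symmetric])
    moreover have "- exp (- (t\<^sup>2)) / (t\<^sup>2 * s) < 0"
      using \<open>0 < t\<close> \<open>0 < s\<close> by (simp add: divide_neg_pos)
    ultimately show "\<exists>d. (U has_real_derivative d) (at t) \<and> d < 0"
      by blast
  next
    have "((\<lambda>y. exp (- (y\<^sup>2)) / (y * sqrt pi)) \<longlongrightarrow> 0) at_top"
      by real_asymp
    from tendsto_diff[OF this tendsto_diff[OF tendsto_const erf_tendsto_1, of 1]]
    show "(U \<longlongrightarrow> 0) at_top"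
      unfolding U_def[abs_def] by simp
  qed
  then show ?thesis
    unfolding U_def by simp
qed

lemma one_minus_erf_le_two_exp:
  assumes "1/2 \<le> x"
  shows "1 - erf x \<le> 2 * exp (- (x\<^sup>2))"
proof -
  have "1 \<le> sqrt pi"
    using pi_gt3 by simp
  with assms have "1/2 \<le> x * sqrt pi"
    using mult_mono[of "1/2" x 1 "sqrt pi"] by simp
  have "1 - erf x \<le> exp (- (x\<^sup>2)) / (x * sqrt pi)"
    using assms by (intro one_minus_erf_le) simp
  also have "\<dots> \<le> exp (- (x\<^sup>2)) / (1/2)"
    using \<open>1/2 \<le> x * sqrt pi\<close> assms by (intro divide_left_mono) auto
  finally show ?thesis
    by simp
qed

section \<open>Decay and approximation properties of psi\<close>

lemma ln_inverse_ge_2: "0 < (e::real) \<Longrightarrow> e \<le> exp (- 2) \<Longrightarrow> 2 \<le> ln (1 / e)"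
  using ln_le_cancel_iff[of e "exp (- 2)"] by (simp add: ln_div)

lemma a_par_nonneg: "0 \<le> ln (1 / e) \<Longrightarrow> 0 \<le> a_par e"
  by (simp add: a_par_def)

lemma a_par_squared: "0 \<le> ln (1 / e) \<Longrightarrow> (a_par e)\<^sup>2 = 4 * ln (1 / e)"
  by (simp add: a_par_def power_mult_distrib)

lemma psi_pos: "0 < psi e p"
  using erf_greater_minus_1[of "a_par e * p"] by (simp add: psi_def phi_def)

lemma erf_step_le_exp_neg_abs:
  fixes a p :: real
  assumes "0 \<le> a" "8 \<le> a\<^sup>2"
  shows "(erf (a * p) + 1) / 2 * exp (- p) \<le> exp (- \<bar>p\<bar>)"
proof (cases "0 \<le> p")
  case True
  then show ?thesis
    using erf_less_1[of "a * p"] erf_greater_minus_1[of "a * p"] by (simp add: mult_left_le_one_le)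
next
  case False
  define q where "q = - p"
  have "0 < q" using False by (simp add: q_def)
  have tail: "(1 - erf (a * q)) / 2 \<le> exp (- (2 * q))"
  proof (cases "q \<le> 1/4")
    case True
    have "(1 - erf (a * q)) / 2 \<le> 1 + (- (2 * q))"
      using erf_nonneg[of "a * q"] \<open>0 \<le> a\<close> \<open>0 < q\<close> True by simp
    also have "\<dots> \<le> exp (- (2 * q))"
      by (rule exp_ge_add_one_self)
    finally show ?thesis .
  next
    case False
    have "2 \<le> a"
      using assms power2_le_imp_le[of 2 a] by simp
    then have "1/2 \<le> a * q"
      using False mult_mono[of 2 a "1/4" q] by simp
    then have "(1 - erf (a * q)) / 2 \<le> exp (- ((a * q)\<^sup>2))"
      using one_minus_erf_le_two_exp[of "a * q"] by simp
    also have "\<dots> \<le> exp (- (2 * q))"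
    proof -
      have "2 * q \<le> 8 * q\<^sup>2"
        using False by (simp add: power2_eq_square)
      also have "\<dots> \<le> (a * q)\<^sup>2"
        using assms(2) by (simp add: power_mult_distrib mult_right_mono)
      finally show ?thesis by simp
    qed
    finally show ?thesis .
  qed
  have "(erf (a * p) + 1) / 2 * exp (- p) = (1 - erf (a * q)) / 2 * exp q"
    by (simp add: q_def erf_minus)
  also have "\<dots> \<le> exp (- (2 * q)) * exp q"
    using tail by (rule mult_right_mono) simp
  also have "\<dots> = exp (- \<bar>p\<bar>)"
    using \<open>0 < q\<close> by (simp add: q_def flip: exp_add)
  finally show ?thesis .
qed

lemma erf_step_approx_exp:
  fixes a p :: real
  assumes "1 \<le> a" "1/2 \<le> p"
  shows "\<bar>(erf (a * p) + 1) / 2 * exp (- p) - exp (- p)\<bar> \<le> exp (- (a\<^sup>2 / 4))"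
proof -
  have "\<bar>(erf (a * p) + 1) / 2 * exp (- p) - exp (- p)\<bar> = exp (- p) * ((1 - erf (a * p)) / 2)"
    using erf_less_1[of "a * p"] by (simp add: field_simps)
  also have "\<dots> \<le> (1 - erf (a * p)) / 2"
    using erf_less_1[of "a * p"] assms(2) by (intro mult_left_le_one_le) auto
  also have "\<dots> \<le> exp (- ((a * p)\<^sup>2))"
    using one_minus_erf_le_two_exp[of "a * p"] assms mult_mono[of 1 a "1/2" p] by simp
  also have "\<dots> \<le> exp (- (a\<^sup>2 / 4))"
    using assms(2) mult_left_mono[OF power_mono[of "1/2" p 2], of "a\<^sup>2"]
    by (simp add: power_mult_distrib power2_eq_square mult_ac)
  finally show ?thesis .
qed

lemma psi_le_exp_neg_abs:
  assumes "0 < e" "e \<le> exp (- 2)"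
  shows "psi e p \<le> exp (- \<bar>p\<bar>)"
proof -
  have "2 \<le> ln (1 / e)"
    using assms by (rule ln_inverse_ge_2)
  then have "0 \<le> a_par e" "8 \<le> (a_par e)\<^sup>2"
    using a_par_nonneg a_par_squared by auto
  then show ?thesis
    unfolding psi_def phi_def by (rule erf_step_le_exp_neg_abs)
qed

lemma psi_approx_exp:
  assumes "0 < e" "e \<le> exp (- 2)" "1/2 \<le> p"
  shows "\<bar>psi e p - exp (- p)\<bar> \<le> e"
proof -
  have "2 \<le> ln (1 / e)"
    using assms(1,2) by (rule ln_inverse_ge_2)
  then have "1 \<le> a_par e"
    using a_par_nonneg a_par_squared power2_le_imp_le[of 1 "a_par e"] by simp
  from erf_step_approx_exp[OF this assms(3)]
  have "\<bar>psi e p - exp (- p)\<bar> \<le> exp (- ln (1 / e))"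
    using \<open>2 \<le> ln (1 / e)\<close> by (simp add: psi_def phi_def a_par_squared)
  also have "\<dots> = e"
    using assms(1) by (simp add: ln_div)
  finally show ?thesis .
qed

section \<open>Higher derivatives of psi\<close>

text \<open>The real Gaussian is differentiated through its entire extension, so that Cauchy's
  estimates apply.\<close>

definition gaussian_deriv :: "nat \<Rightarrow> real \<Rightarrow> real" where
  "gaussian_deriv m x = Re ((deriv ^^ m) (\<lambda>z. exp (- (z\<^sup>2))) (complex_of_real x))"

lemma gaussian_deriv_0 [simp]: "gaussian_deriv 0 x = exp (- (x\<^sup>2))"
  by (simp add: gaussian_deriv_def exp_of_real flip: of_real_power of_real_minus)

lemma gaussian_deriv_has_real_derivative:
  "(gaussian_deriv m has_real_derivative gaussian_deriv (Suc m) x) (at x)"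
proof -
  have "((deriv ^^ m) (\<lambda>z. exp (- (z\<^sup>2))) has_field_derivative
      (deriv ^^ Suc m) (\<lambda>z. exp (- (z\<^sup>2))) (complex_of_real x)) (at (complex_of_real x))"
    by (rule has_field_derivative_higher_deriv[of _ UNIV]) (auto intro!: holomorphic_intros)
  then show ?thesis
    unfolding gaussian_deriv_def[abs_def]
    by (intro has_field_derivative_Re has_vector_derivative_real_field)
qed

lemma gaussian_deriv_bound:
  assumes "0 < \<rho>"
  shows "\<bar>gaussian_deriv m x\<bar> \<le> fact m * exp (2 * \<rho>\<^sup>2 - x\<^sup>2 / 2) / \<rho> ^ m"
  unfolding gaussian_deriv_def
proof (rule order_trans[OF abs_Re_le_cmod Cauchy_inequality])
  show "(\<lambda>z. exp (- (z\<^sup>2))) holomorphic_on ball (complex_of_real x) \<rho>"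
    and "continuous_on (cball (complex_of_real x) \<rho>) (\<lambda>z. exp (- (z\<^sup>2)))"
    by (auto intro!: holomorphic_intros continuous_intros)
  fix w assume w: "cmod (complex_of_real x - w) = \<rho>"
  have "(x - Re w)\<^sup>2 \<le> \<rho>\<^sup>2" "(Im w)\<^sup>2 \<le> \<rho>\<^sup>2"
    using abs_Re_le_cmod[of "complex_of_real x - w"] abs_Im_le_cmod[of "complex_of_real x - w"] w
    by (auto intro!: power_mono[of _ _ 2, where 'a = real, OF _ abs_ge_zero, simplified])
  moreover have "x\<^sup>2 \<le> 2 * (Re w)\<^sup>2 + 2 * (x - Re w)\<^sup>2"
    using zero_le_square[of "x - 2 * Re w"] by (simp add: power2_eq_square algebra_simps)
  ultimately have "Re (- (w\<^sup>2)) \<le> 2 * \<rho>\<^sup>2 - x\<^sup>2 / 2"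
    by (simp add: power2_eq_square)
  then show "cmod (exp (- (w\<^sup>2))) \<le> exp (2 * \<rho>\<^sup>2 - x\<^sup>2 / 2)"
    by (simp add: norm_exp_eq_Re)
qed (use assms in auto)

lemma higher_deriv_eq_of_has_real_derivative_seq:
  assumes "\<And>k x. (U k has_real_derivative U (Suc k) x) (at x)"
  shows "(deriv ^^ n) (U 0) = U n"
proof (induction n)
  case (Suc n)
  have "(deriv ^^ Suc n) (U 0) = deriv (U n)"
    using Suc.IH by simp
  also have "\<dots> = U (Suc n)"
    using DERIV_imp_deriv[OF assms] by (simp add: fun_eq_iff)
  finally show ?case .
qed simp

lemma sum_choose_Suc_convolution:
  fixes U V :: "nat \<Rightarrow> real"
  shows "(\<Sum>k\<le>n. real (n choose k) * (U (Suc k) * V (n - k) + U k * V (Suc (n - k))))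
       = (\<Sum>k\<le>Suc n. real (Suc n choose k) * U k * V (Suc n - k))"
proof -
  define T where "T k = real (n choose k) * U k * V (Suc n - k)" for k
  have "(\<Sum>k\<le>Suc n. T k) = T 0 + (\<Sum>k\<le>n. T (Suc k))"
    by (rule sum.atMost_Suc_shift)
  moreover have "(\<Sum>k\<le>Suc n. T k) = (\<Sum>k\<le>n. real (n choose k) * U k * V (Suc (n - k)))"
    by (auto simp: T_def Suc_diff_le intro: sum.cong)
  moreover have "(\<Sum>k\<le>Suc n. real (Suc n choose k) * U k * V (Suc n - k))
      = U 0 * V (Suc n) + (\<Sum>k\<le>n. real (n choose k) * U (Suc k) * V (n - k)) + (\<Sum>k\<le>n. T (Suc k))"
    by (subst sum.atMost_Suc_shift) (simp add: T_def sum.distrib algebra_simps)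
  ultimately show ?thesis
    by (simp add: T_def sum.distrib algebra_simps)
qed

lemma higher_deriv_mult_of_has_real_derivative_seq:
  assumes U: "\<And>k x. (U k has_real_derivative U (Suc k) x) (at x)"
    and V: "\<And>k x. (V k has_real_derivative V (Suc k) x) (at x)"
  shows "(deriv ^^ n) (\<lambda>x. U 0 x * V 0 x) = (\<lambda>x. \<Sum>k\<le>n. real (n choose k) * U k x * V (n - k) x)"
proof -
  define W where "W n x = (\<Sum>k\<le>n. real (n choose k) * U k x * V (n - k) x)" for n x
  have W: "(W n has_real_derivative W (Suc n) x) (at x)" for n x
  proof -
    have "(W n has_real_derivative
        (\<Sum>k\<le>n. real (n choose k) * (U (Suc k) x * V (n - k) x + U k x * V (Suc (n - k)) x))) (at x)"
      unfolding W_def[abs_def]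
      by (rule derivative_eq_intros refl U V | simp add: algebra_simps)+
    then show ?thesis
      using sum_choose_Suc_convolution[of n "\<lambda>k. U k x" "\<lambda>k. V k x"] by (simp add: W_def)
  qed
  from higher_deriv_eq_of_has_real_derivative_seq[of W, OF W, of n] show ?thesis
    by (simp add: W_def[abs_def])
qed

lemma signed_exp_neg_has_real_derivative:
  "((\<lambda>p. (-1) ^ j * exp (- p)) has_real_derivative (-1) ^ Suc j * exp (- p)) (at p)"
  by (auto intro!: derivative_eq_intros)

text \<open>The \<open>k\<close>-th derivative of \<open>p \<mapsto> (erf (a p) + 1) / 2\<close>, i.e. of \<open>phi \<epsilon>\<close>
  for \<open>a = a_par \<epsilon>\<close>.\<close>

definition phi_deriv :: "real \<Rightarrow> nat \<Rightarrow> real \<Rightarrow> real" where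
  "phi_deriv a k p =
    (if k = 0 then (erf (a * p) + 1) / 2 else a ^ k / sqrt pi * gaussian_deriv (k - 1) (a * p))"

lemma phi_deriv_has_real_derivative:
  "(phi_deriv a k has_real_derivative phi_deriv a (Suc k) p) (at p)"
proof (cases k)
  case 0
  have "((\<lambda>p. (erf (a * p) + 1) / 2) has_real_derivative phi_deriv a (Suc 0) p) (at p)"
    by (auto intro!: derivative_eq_intros simp: phi_deriv_def algebra_simps)
  then show ?thesis
    using 0 by (simp add: phi_deriv_def[abs_def])
next
  case (Suc m)
  have "((\<lambda>p. a ^ k / sqrt pi * gaussian_deriv m (a * p)) has_real_derivative
      a ^ k / sqrt pi * (gaussian_deriv (Suc m) (a * p) * a)) (at p)"
    by (intro DERIV_cmult DERIV_chain2[OF gaussian_deriv_has_real_derivative] DERIV_cmult_Id)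
  then show ?thesis
    using Suc by (simp add: phi_deriv_def[abs_def] mult_ac)
qed

lemma higher_deriv_psi:
  "(deriv ^^ r) (psi e) =
    (\<lambda>p. \<Sum>k\<le>r. real (r choose k) * phi_deriv (a_par e) k p * ((-1) ^ (r - k) * exp (- p)))"
proof -
  have "psi e = (\<lambda>p. phi_deriv (a_par e) 0 p * ((-1) ^ 0 * exp (- p)))"
    by (simp add: fun_eq_iff psi_def phi_def phi_deriv_def)
  with higher_deriv_mult_of_has_real_derivative_seq[of "phi_deriv (a_par e)" "\<lambda>j p. (-1) ^ j * exp (- p)",
      OF phi_deriv_has_real_derivative signed_exp_neg_has_real_derivative]
  show ?thesis
    by simp
qed

section \<open>Bounds on the higher derivatives\<close>

lemma power_mult_fact_div_sqrt_le:
  assumes "0 \<le> a" "a\<^sup>2 \<le> 9 * real r" "Suc m \<le> r"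
  shows "a ^ Suc m * fact m / sqrt (real r) ^ m \<le> (3 * real r) ^ Suc m"
proof -
  define \<rho> where "\<rho> = sqrt (real r)"
  have "1 \<le> \<rho>" "\<rho>\<^sup>2 = real r"
    using assms(3) by (auto simp: \<rho>_def)
  have "a \<le> 3 * \<rho>"
    using assms(2) \<open>\<rho>\<^sup>2 = real r\<close> \<open>1 \<le> \<rho>\<close> power2_le_imp_le[of a "3 * \<rho>"]
    by (simp add: power_mult_distrib)
  have "(fact m :: real) \<le> real r ^ m"
    using fact_le_power[of m, where 'a = real] power_mono[of "real m" "real r" m] assms(3) by simp
  also have "\<dots> = \<rho> ^ m * \<rho> ^ m"
    by (simp flip: \<open>\<rho>\<^sup>2 = real r\<close> power_mult power_add mult_2)
  finally have "a ^ Suc m * fact m \<le> (3 * \<rho>) ^ Suc m * (\<rho> ^ m * \<rho> ^ m)"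
    using \<open>a \<le> 3 * \<rho>\<close> assms(1) by (intro mult_mono power_mono) auto
  then have "a ^ Suc m * fact m / \<rho> ^ m \<le> (3 * \<rho>) ^ Suc m * \<rho> ^ m"
    using \<open>1 \<le> \<rho>\<close> by (simp add: pos_divide_le_eq mult.assoc)
  also have "\<dots> \<le> (3 * \<rho>) ^ Suc m * \<rho> ^ Suc m"
    using \<open>1 \<le> \<rho>\<close> by (intro mult_left_mono power_increasing) auto
  also have "\<dots> = (3 * \<rho> * \<rho>) ^ Suc m"
    by (simp only: power_mult_distrib)
  also have "3 * \<rho> * \<rho> = 3 * real r"
    using \<open>\<rho>\<^sup>2 = real r\<close> by (simp add: power2_eq_square)
  finally show ?thesis
    by (simp add: \<rho>_def)
qed

lemma phi_deriv_Suc_bound: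
  assumes "0 \<le> a" "a\<^sup>2 \<le> 9 * real r" "Suc m \<le> r"
  shows "\<bar>phi_deriv a (Suc m) p\<bar> \<le> (3 * real r) ^ Suc m * exp (2 * real r - (a * p)\<^sup>2 / 2)"
proof -
  define \<rho> where "\<rho> = sqrt (real r)"
  have "0 < \<rho>" "\<rho>\<^sup>2 = real r"
    using assms(3) by (auto simp: \<rho>_def)
  have "1 \<le> sqrt pi"
    using pi_gt3 by simp
  have "\<bar>phi_deriv a (Suc m) p\<bar> = a ^ Suc m / sqrt pi * \<bar>gaussian_deriv m (a * p)\<bar>"
    using assms(1) by (simp add: phi_deriv_def abs_mult)
  also have "\<dots> \<le> a ^ Suc m * \<bar>gaussian_deriv m (a * p)\<bar>"
    using \<open>1 \<le> sqrt pi\<close> zero_le_power[OF assms(1), of "Suc m"]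
    by (intro mult_right_mono) (simp_all add: divide_le_eq mult_le_cancel_left1)
  also have "\<dots> \<le> a ^ Suc m * (fact m * exp (2 * \<rho>\<^sup>2 - (a * p)\<^sup>2 / 2) / \<rho> ^ m)"
    using gaussian_deriv_bound[OF \<open>0 < \<rho>\<close>, of m "a * p"] assms(1) by (intro mult_left_mono) auto
  also have "\<dots> = a ^ Suc m * fact m / \<rho> ^ m * exp (2 * real r - (a * p)\<^sup>2 / 2)"
    by (simp add: \<open>\<rho>\<^sup>2 = real r\<close>)
  also have "\<dots> \<le> (3 * real r) ^ Suc m * exp (2 * real r - (a * p)\<^sup>2 / 2)"
    using power_mult_fact_div_sqrt_le[OF assms] by (intro mult_right_mono) (auto simp: \<rho>_def)
  finally show ?thesis .
qed

lemma gaussian_times_exp_neg_le: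
  fixes a p :: real
  assumes "8 \<le> a\<^sup>2"
  shows "exp (- ((a * p)\<^sup>2 / 2)) * exp (- p) \<le> 3 * exp (- \<bar>p\<bar>)"
proof -
  have "8 * p\<^sup>2 \<le> (a * p)\<^sup>2"
    using assms by (simp add: power_mult_distrib mult_right_mono)
  moreover have "(2 * \<bar>p\<bar> - 1/2)\<^sup>2 = 4 * p\<^sup>2 - 2 * \<bar>p\<bar> + 1/4"
    by (simp add: power2_eq_square algebra_simps)
  ultimately have "- ((a * p)\<^sup>2 / 2) - p \<le> 1/4 - \<bar>p\<bar>"
    using zero_le_power2[of "2 * \<bar>p\<bar> - 1/2"] abs_ge_minus_self[of p] by linarith
  then have "exp (- ((a * p)\<^sup>2 / 2)) * exp (- p) \<le> exp (1/4) * exp (- \<bar>p\<bar>)"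
    by (simp flip: exp_add)
  also have "\<dots> \<le> 3 * exp (- \<bar>p\<bar>)"
  proof -
    have "exp (1/4 :: real) \<le> exp 1"
      by simp
    with exp_le have "exp (1/4 :: real) \<le> 3"
      by linarith
    then show ?thesis
      by (intro mult_right_mono) auto
  qed
  finally show ?thesis .
qed

lemma phi_deriv_times_exp_neg_bound:
  assumes "0 \<le> a" "8 \<le> a\<^sup>2" "a\<^sup>2 \<le> 8 * real r" "k \<le> r"
  shows "\<bar>phi_deriv a k p\<bar> * exp (- p) \<le> 3 * exp (2 * real r) * (3 * real r) ^ k * exp (- \<bar>p\<bar>)"
proof (cases k)
  case 0
  have "\<bar>phi_deriv a k p\<bar> * exp (- p) = (erf (a * p) + 1) / 2 * exp (- p)"
    using 0 erf_greater_minus_1[of "a * p"] by (simp add: phi_deriv_def)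
  also have "\<dots> \<le> exp (- \<bar>p\<bar>)"
    using assms(1,2) by (rule erf_step_le_exp_neg_abs)
  also have "\<dots> \<le> 3 * exp (2 * real r) * (3 * real r) ^ k * exp (- \<bar>p\<bar>)"
  proof -
    have "1 \<le> exp (2 * real r)"
      by simp
    then have "1 \<le> 3 * exp (2 * real r)"
      by linarith
    with 0 show ?thesis
      by simp
  qed
  finally show ?thesis .
next
  case (Suc m)
  have "\<bar>phi_deriv a k p\<bar> * exp (- p)
      \<le> (3 * real r) ^ k * exp (2 * real r - (a * p)\<^sup>2 / 2) * exp (- p)"
    using phi_deriv_Suc_bound[of a r m p] assms Suc by (intro mult_right_mono) auto
  also have "\<dots> = (3 * real r) ^ k * exp (2 * real r) * (exp (- ((a * p)\<^sup>2 / 2)) * exp (- p))"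
    by (simp only: diff_conv_add_uminus exp_add mult.assoc)
  also have "\<dots> \<le> (3 * real r) ^ k * exp (2 * real r) * (3 * exp (- \<bar>p\<bar>))"
    using gaussian_times_exp_neg_le[OF assms(2)] by (intro mult_left_mono) auto
  finally show ?thesis
    by (simp add: mult_ac)
qed

lemma leibniz_sum_phi_deriv_bound:
  assumes "0 \<le> a" "8 \<le> a\<^sup>2" "a\<^sup>2 \<le> 8 * real r"
  shows "\<bar>\<Sum>k\<le>r. real (r choose k) * phi_deriv a k p * ((-1) ^ (r - k) * exp (- p))\<bar>
    \<le> 3 * exp (2 * real r) * (3 * real r + 1) ^ r * exp (- \<bar>p\<bar>)"
proof -
  define E where "E = 3 * exp (2 * real r) * exp (- \<bar>p\<bar>)"
  have "\<bar>\<Sum>k\<le>r. real (r choose k) * phi_deriv a k p * ((-1) ^ (r - k) * exp (- p))\<bar>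
      \<le> (\<Sum>k\<le>r. real (r choose k) * (\<bar>phi_deriv a k p\<bar> * exp (- p)))"
    by (rule order_trans[OF sum_abs]) (simp add: abs_mult power_abs mult.assoc)
  also have "\<dots> \<le> (\<Sum>k\<le>r. real (r choose k) * ((3 * real r) ^ k * E))"
    using phi_deriv_times_exp_neg_bound[OF assms]
    by (intro sum_mono mult_left_mono) (auto simp: E_def mult_ac)
  also have "\<dots> = E * (\<Sum>k\<le>r. of_nat (r choose k) * (3 * real r) ^ k * 1 ^ (r - k))"
    by (simp add: sum_distrib_left mult_ac)
  also have "(\<Sum>k\<le>r. of_nat (r choose k) * (3 * real r) ^ k * 1 ^ (r - k)) = (3 * real r + 1) ^ r"
    by (rule binomial_ring[symmetric])
  finally show ?thesis
    by (simp add: E_def mult_ac)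
qed

lemma three_exp_times_power_le:
  assumes "1 \<le> r"
  shows "3 * exp (2 * real r) * (3 * real r + 1) ^ r \<le> (108 * real r) ^ r"
proof -
  have "(3::real) \<le> 3 ^ r"
    using assms power_increasing[of 1 r "3::real"] by simp
  moreover have "exp (2 * real r) \<le> 9 ^ r"
  proof -
    have "exp (2::real) \<le> 3 * 3"
      using mult_mono[OF exp_le exp_le] by (simp flip: exp_add)
    then show ?thesis
      using power_mono[of "exp 2" "9::real" r] exp_of_nat_mult[of r "2::real"] by (simp add: mult.commute)
  qed
  ultimately have "3 * exp (2 * real r) \<le> 3 ^ r * 9 ^ r"
    by (rule mult_mono) auto
  moreover have "(3 * real r + 1) ^ r \<le> (4 * real r) ^ r"
    using assms by (intro power_mono) auto
  ultimately have "3 * exp (2 * real r) * (3 * real r + 1) ^ r \<le> (3 ^ r * 9 ^ r) * (4 * real r) ^ r"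
    by (rule mult_mono) auto
  also have "\<dots> = (3 * 9 * (4 * real r)) ^ r"
    by (simp only: power_mult_distrib)
  also have "3 * 9 * (4 * real r) = 108 * real r"
    by simp
  finally show ?thesis .
qed

lemma has_bochner_integral_exp_neg_two_halfline:
  "has_bochner_integral lborel (\<lambda>x. indicator {0..} x * exp (- 2 * x)) (1/2 :: real)"
proof (rule has_bochner_integral_nn_integral)
  have "(\<integral>\<^sup>+x. ennreal (exp (- 2 * x)) * indicator {0..} x \<partial>lborel) = ennreal (0 - (- exp (- 2 * 0) / 2))"
  proof (rule nn_integral_FTC_atLeast)
    show "((\<lambda>x::real. - exp (- 2 * x) / 2) \<longlongrightarrow> 0) at_top" by real_asymp
    show "(\<lambda>x::real. exp (- 2 * x)) \<in> borel_measurable borel"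
      by (intro borel_measurable_continuous_onI continuous_intros)
    show "((\<lambda>x::real. - exp (- 2 * x) / 2) has_real_derivative exp (- 2 * x)) (at x)" for x
      by (auto intro!: derivative_eq_intros)
  qed simp
  then show "(\<integral>\<^sup>+x. ennreal (indicator {0..} x * exp (- 2 * x)) \<partial>lborel) = ennreal (1/2)"
    by (simp add: indicator_mult_ennreal mult.commute)
qed auto

lemma L2_norm_R_le_of_exp_decay:
  fixes F :: "real \<Rightarrow> real"
  assumes cont: "\<And>x. isCont F x" and "0 \<le> K" and decay: "\<And>x. \<bar>F x\<bar> \<le> K * exp (- \<bar>x\<bar>)"
  shows "integrable lborel (\<lambda>x. (F x)\<^sup>2)" and "L2_norm_R F \<le> K"
proof -
  define h :: "real \<Rightarrow> real" where "h x = indicator {0..} x * exp (- 2 * x)" for x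
  define g where "g x = K\<^sup>2 * (h x + h (- x))" for x
  have "has_bochner_integral lborel h (1/2)"
    using has_bochner_integral_exp_neg_two_halfline by (simp add: h_def[abs_def])
  moreover from this have "has_bochner_integral lborel (\<lambda>x. h (- x)) (1/2)"
    using lborel_has_bochner_integral_real_affine_iff[of "-1" h "1/2" 0] by simp
  ultimately have "has_bochner_integral lborel g (K\<^sup>2 * (1/2 + 1/2))"
    unfolding g_def by (intro has_bochner_integral_mult_right has_bochner_integral_add)
  then have "integrable lborel g" "integral\<^sup>L lborel g = K\<^sup>2"
    by (auto simp: has_bochner_integral_iff)
  have bound: "(F x)\<^sup>2 \<le> g x" for x
  proof -
    have "(F x)\<^sup>2 \<le> (K * exp (- \<bar>x\<bar>))\<^sup>2"
      using decay[of x] abs_le_square_iff by (metis abs_ge_zero abs_of_nonneg order.trans)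
    also have "\<dots> = K\<^sup>2 * exp (- 2 * \<bar>x\<bar>)"
      by (simp add: power_mult_distrib power2_eq_square flip: exp_add)
    also have "\<dots> \<le> g x"
      unfolding g_def h_def by (intro mult_left_mono) (auto simp: indicator_def)
    finally show ?thesis .
  qed
  have "continuous_on UNIV (\<lambda>x. (F x)\<^sup>2)"
    by (intro continuous_at_imp_continuous_on ballI continuous_intros cont)
  then have "(\<lambda>x. (F x)\<^sup>2) \<in> borel_measurable lborel"
    by (simp add: borel_measurable_continuous_onI)
  then show int: "integrable lborel (\<lambda>x. (F x)\<^sup>2)"
  proof (rule Bochner_Integration.integrable_bound[OF \<open>integrable lborel g\<close>])
    show "AE x in lborel. norm ((F x)\<^sup>2) \<le> norm (g x)"
      using bound by (auto intro: order_trans[OF _ abs_ge_self])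
  qed
  have "integral\<^sup>L lborel (\<lambda>x. (F x)\<^sup>2) \<le> integral\<^sup>L lborel g"
    using int \<open>integrable lborel g\<close> bound by (rule integral_mono)
  then have "integral\<^sup>L lborel (\<lambda>x. (F x)\<^sup>2) \<le> K\<^sup>2"
    using \<open>integral\<^sup>L lborel g = K\<^sup>2\<close> by simp
  then show "L2_norm_R F \<le> K"
    using \<open>0 \<le> K\<close> real_sqrt_le_mono[of _ "K\<^sup>2"] by (simp add: L2_norm_R_def)
qed

lemma isCont_higher_deriv_psi: "isCont ((deriv ^^ r) (psi e)) x"
  unfolding higher_deriv_psi by (intro continuous_intros DERIV_isCont[OF phi_deriv_has_real_derivative])

lemma psi_higher_deriv_bound:
  assumes "0 < e" "e \<le> exp (- 2)" "ln (1 / e) / 2 \<le> real r"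
  shows "\<bar>(deriv ^^ r) (psi e) p\<bar> \<le> (108 * real r) ^ r * exp (- \<bar>p\<bar>)"
proof -
  have "2 \<le> ln (1 / e)"
    using assms(1,2) by (rule ln_inverse_ge_2)
  then have a: "0 \<le> a_par e" "8 \<le> (a_par e)\<^sup>2" "(a_par e)\<^sup>2 \<le> 8 * real r"
    using a_par_nonneg a_par_squared assms(3) by auto
  have "\<bar>(deriv ^^ r) (psi e) p\<bar> \<le> 3 * exp (2 * real r) * (3 * real r + 1) ^ r * exp (- \<bar>p\<bar>)"
    unfolding higher_deriv_psi by (rule leibniz_sum_phi_deriv_bound[OF a])
  also have "\<dots> \<le> (108 * real r) ^ r * exp (- \<bar>p\<bar>)"
    using \<open>2 \<le> ln (1 / e)\<close> assms(3) by (intro mult_right_mono three_exp_times_power_le) auto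
  finally show ?thesis .
qed

lemma psi_higher_deriv_L2:
  assumes "0 < e" "e \<le> exp (- 2)" "ln (1 / e) / 2 \<le> real r"
  shows "integrable lborel (\<lambda>x. ((deriv ^^ r) (psi e) x)\<^sup>2)"
    and "L2_norm_R ((deriv ^^ r) (psi e)) powr (1 / real r) \<le> 108 * real r"
proof -
  have "1 \<le> real r"
    using ln_inverse_ge_2[OF assms(1,2)] assms(3) by simp
  note L2 = L2_norm_R_le_of_exp_decay[OF isCont_higher_deriv_psi _ psi_higher_deriv_bound[OF assms]]
  show "integrable lborel (\<lambda>x. ((deriv ^^ r) (psi e) x)\<^sup>2)"
    by (rule L2(1)) simp
  have "L2_norm_R ((deriv ^^ r) (psi e)) powr (1 / real r) \<le> ((108 * real r) ^ r) powr (1 / real r)"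
    using L2(2) by (intro powr_mono2) (auto simp: L2_norm_R_def)
  also have "\<dots> = 108 * real r"
  proof -
    have "(108 * real r) ^ r = (108 * real r) powr real r"
      using \<open>1 \<le> real r\<close> by (simp add: powr_realpow)
    then show ?thesis
      using \<open>1 \<le> real r\<close> by (simp add: powr_powr)
  qed
  finally show "L2_norm_R ((deriv ^^ r) (psi e)) powr (1 / real r) \<le> 108 * real r" .
qed

theorem theorem4p1:
  shows "(\<forall>\<epsilon>::real. 0 < \<epsilon> \<and> \<epsilon> \<le> exp (-2) \<longrightarrow>
            (\<forall>p::real. 0 < psi \<epsilon> p \<and> psi \<epsilon> p \<le> exp (- \<bar>p\<bar>)) \<and>
            (\<forall>p::real. p \<ge> 1/2 \<longrightarrow> \<bar>psi \<epsilon> p - exp (- p)\<bar> \<le> \<epsilon>))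
         \<and> (\<exists>C::real. C > 0 \<and>
            (\<forall>\<epsilon>::real. \<forall>r::nat. 0 < \<epsilon> \<and> \<epsilon> \<le> exp (-2) \<and>
               ln (1/\<epsilon>) / 2 \<le> real r \<and> real r \<le> ln (1/\<epsilon>) \<longrightarrow>
               integrable lborel (\<lambda>x. ((deriv ^^ r) (psi \<epsilon>) x)\<^sup>2) \<and>
               L2_norm_R ((deriv ^^ r) (psi \<epsilon>)) powr (1 / real r) \<le> C * real r))"
proof (intro conjI exI[of _ 108])
  show "\<forall>\<epsilon>::real. 0 < \<epsilon> \<and> \<epsilon> \<le> exp (-2) \<longrightarrow>
      (\<forall>p. 0 < psi \<epsilon> p \<and> psi \<epsilon> p \<le> exp (- \<bar>p\<bar>)) \<and>
      (\<forall>p. p \<ge> 1/2 \<longrightarrow> \<bar>psi \<epsilon> p - exp (- p)\<bar> \<le> \<epsilon>)"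
    using psi_pos psi_le_exp_neg_abs psi_approx_exp by blast
  show "\<forall>\<epsilon> r. 0 < \<epsilon> \<and> \<epsilon> \<le> exp (-2) \<and> ln (1/\<epsilon>) / 2 \<le> real r \<and> real r \<le> ln (1/\<epsilon>) \<longrightarrow>
      integrable lborel (\<lambda>x. ((deriv ^^ r) (psi \<epsilon>) x)\<^sup>2) \<and>
      L2_norm_R ((deriv ^^ r) (psi \<epsilon>)) powr (1 / real r) \<le> 108 * real r"
    using psi_higher_deriv_L2 by blast
qed simp

end
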